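(* Let $G$ be a group with finite generating sets $S$ and $T$ (neither containing the identity), and let $d_S$ and $d_T$ be the cardinal metrics on $G$ induced by $S$ and $T$, respectively. Then every injective map $f\colon G\to G$ is bi-Lipschitz as a map $(G,d_T)\to(G,d_S)$, i.e. there is a constant $K\ge 1$ with $\frac1K d_T(g,h)\le d_S(f(g),f(h))\le K d_T(g,h)$ for all $g,h\in G$. In particular, every permutation of $G$ is a bi-Lipschitz equivalence, and so $(G,d_S)$ and $(G,d_T)$ are bi-Lipschitz equivalent.
   Context: For a generating set $U$ of $G$ (not containing the identity), the cardinal norm is $\|g\|_U = \min\{|A| : A\subseteq U,\ g\in\langle A\rangle\}$, where $\langle A\rangle$ is the subgroup generated by $A$, and the cardinal metric induced by $U$ is $d_U(g,h)=\|g^{-1}h\|_U$. *)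

theory Defs
  imports Complex_Main "HOL-Algebra.Generated_Groups"
begin

definition cardinal_norm :: "('a, 'b) monoid_scheme \<Rightarrow> 'a set \<Rightarrow> 'a \<Rightarrow> nat" where
  "cardinal_norm G U g = (LEAST n. \<exists>A. A \<subseteq> U \<and> finite A \<and> card A = n \<and> g \<in> generate G A)"

definition cardinal_metric :: "('a, 'b) monoid_scheme \<Rightarrow> 'a set \<Rightarrow> 'a \<Rightarrow> 'a \<Rightarrow> nat" where
  "cardinal_metric G U g h = cardinal_norm G U (inv\<^bsub>G\<^esub> g \<otimes>\<^bsub>G\<^esub> h)"

definition finite_gen_set :: "('a, 'b) monoid_scheme \<Rightarrow> 'a set \<Rightarrow> bool" where
  "finite_gen_set G U \<longleftrightarrow> finite U \<and> U \<subseteq> carrier G \<and> \<one>\<^bsub>G\<^esub> \<notin> U \<and> generate G U = carrier G"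

end

theory Submission
  imports Defs
begin

text \<open>Each cardinal metric is bounded by the size of its generating set and vanishes
exactly on the diagonal. Hence distinct points are at distance between 1 and a fixed bound
in either metric, so an injective map distorts distances by at most that bound.\<close>

lemma cardinal_norm_le_card:
  assumes "finite U" "g \<in> generate G U"
  shows "cardinal_norm G U g \<le> card U"
  unfolding cardinal_norm_def by (rule Least_le) (use assms in blast)

lemma cardinal_norm_eq_0_iff:
  assumes "group G" "finite U" "g \<in> generate G U"
  shows "cardinal_norm G U g = 0 \<longleftrightarrow> g = \<one>\<^bsub>G\<^esub>"
proof
  assume "cardinal_norm G U g = 0"
  moreover have "\<exists>A. A \<subseteq> U \<and> finite A \<and> card A = cardinal_norm G U g \<and> g \<in> generate G A"
    unfolding cardinal_norm_def by (rule LeastI_ex) (use assms in blast)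
  ultimately have "g \<in> generate G {}"
    by (metis card_0_eq)
  then show "g = \<one>\<^bsub>G\<^esub>"
    using group.generate_empty[OF \<open>group G\<close>] by simp
next
  assume "g = \<one>\<^bsub>G\<^esub>"
  then have "cardinal_norm G U g \<le> card {}"
    unfolding cardinal_norm_def by (intro Least_le) (auto intro: generate.one)
  then show "cardinal_norm G U g = 0" by simp
qed

lemma cardinal_metric_le_card:
  fixes G (structure)
  assumes "group G" "finite_gen_set G U" "g \<in> carrier G" "h \<in> carrier G"
  shows "cardinal_metric G U g h \<le> card U"
proof -
  interpret group G by fact
  show ?thesis
    using assms unfolding cardinal_metric_def finite_gen_set_def
    by (intro cardinal_norm_le_card) auto
qed

lemma cardinal_metric_eq_0_iff:
  fixes G (structure)
  assumes "group G" "finite_gen_set G U" "g \<in> carrier G" "h \<in> carrier G"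
  shows "cardinal_metric G U g h = 0 \<longleftrightarrow> g = h"
proof -
  interpret group G by fact
  have "cardinal_metric G U g h = 0 \<longleftrightarrow> inv g \<otimes> h = \<one>"
    using assms unfolding cardinal_metric_def finite_gen_set_def
    by (intro cardinal_norm_eq_0_iff) auto
  also have "\<dots> \<longleftrightarrow> g = h"
    using assms(3,4) by (metis inv_closed inv_equality inv_inv r_inv)
  finally show ?thesis .
qed

lemma bounded_nat_le_mult:
  fixes K :: real and m n :: nat
  assumes "m \<le> K" "n = 0 \<Longrightarrow> m = 0"
  shows "real m \<le> K * real n"
proof (cases "n = 0")
  case False
  then have "K \<le> K * real n"
    using assms(1) by (simp add: mult_le_cancel_left1)
  with assms(1) show ?thesis by linarith
qed (use assms in simp)

theorem mainTheorem4:
  fixes G :: "('a, 'b) monoid_scheme" and S T :: "'a set" and f :: "'a \<Rightarrow> 'a"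
  assumes "group G"
    and "finite_gen_set G S" and "finite_gen_set G T"
    and "f \<in> carrier G \<rightarrow> carrier G" and "inj_on f (carrier G)"
  shows "\<exists>K::real. K \<ge> 1 \<and> (\<forall>g\<in>carrier G. \<forall>h\<in>carrier G.
           (1 / K) * real (cardinal_metric G T g h) \<le> real (cardinal_metric G S (f g) (f h)) \<and>
           real (cardinal_metric G S (f g) (f h)) \<le> K * real (cardinal_metric G T g h))"
proof (intro exI[of _ "real (card S + card T + 1)"] conjI ballI)
  let ?K = "real (card S + card T + 1)"
  show "?K \<ge> 1" by simp
  fix g h
  assume g: "g \<in> carrier G" and h: "h \<in> carrier G"
  then have fg: "f g \<in> carrier G" and fh: "f h \<in> carrier G"
    using assms(4) by auto
  let ?dT = "cardinal_metric G T g h" and ?dS = "cardinal_metric G S (f g) (f h)"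
  have "?dT \<le> ?K" "?dS \<le> ?K"
    using cardinal_metric_le_card[OF assms(1,3) g h] cardinal_metric_le_card[OF assms(1,2) fg fh]
    by simp_all
  moreover have "?dT = 0 \<longleftrightarrow> ?dS = 0"
    using cardinal_metric_eq_0_iff[OF assms(1,3) g h] cardinal_metric_eq_0_iff[OF assms(1,2) fg fh]
      inj_on_eq_iff[OF assms(5) g h] by simp
  ultimately have "real ?dT \<le> ?K * real ?dS" "real ?dS \<le> ?K * real ?dT"
    by (auto intro!: bounded_nat_le_mult)
  then show "1 / ?K * real ?dT \<le> real ?dS" "real ?dS \<le> ?K * real ?dT"
    by (simp_all add: field_simps)
qed

end
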